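(* There are functors $\mathbf{FinGraph}^l_\star\to\mathbf{FinLoset}$ and $\mathbf{FinGraph}^s_\star\to\mathbf{FinLoset}$ which compute the lexicographic depth-first and breadth-first traversals respectively, i.e. which send each object $G$ to the vertices of $G$ linearly ordered by the lexicographic depth-first traversal (respectively, the lexicographic breadth-first traversal) of $G$ from its distinguished vertex.
   Context: A (directed) graph is $(V,\to)$ with $\to\subseteq V\times V$; $N(u)$ is the set of outgoing edges of $u$. A pointed graph has a distinguished vertex $v_0$; connected means every vertex is reachable by a path from $v_0$. A path is a finite sequence $v_1\to\cdots\to v_n$ of vertices joined by edges, of length $|\pi|$; proper if no vertex repeats; co-initial paths share their source; $\pi\sqsubset\sigma$ means $\pi$ is a proper prefix of $\sigma$. A finite edge-ordered graph is a finite graph with a strict linear order $\triangleleft$ on each neighborhood. Lexicographic path order: if $\pi\sqsubset\sigma$ then $\pi\prec\sigma$ (symmetrically); otherwise, with $\zeta$ the longest common prefix, $u$ its target and $v_1,v_2$ the next vertices, $\pi\prec\sigma$ iff $u\to v_1\triangleleft u\to v_2$. Shortlex: $\pi\prec^s\sigma$ iff $|\pi|<|\sigma|$ or ($|\pi|=|\sigma|$ and $\pi\prec\sigma$). $\min(u\rightsquigarrow v)$ is the $\prec$-least proper path, $\min^s(u\rightsquigarrow v)$ the $\prec^s$-least path, from $u$ to $v$. A homomorphism of finite pointed edge-ordered graphs $h:G\to H$ is a vertex map with (i) $u\to v$ implies $h(u)\to h(v)$; (ii) the distinguished vertex of $G$ is the unique vertex mapped to the distinguished vertex of $H$; (iii)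 $u\to v_1\triangleleft u\to v_2$ implies $h(u)\to h(v_1)\triangleleft h(u)\to h(v_2)$. A lex-homomorphism additionally satisfies $h(\min(u\rightsquigarrow v))=\min(h(u)\rightsquigarrow h(v))$; a short-lex homomorphism additionally satisfies $h(\min^s(u\rightsquigarrow v))=\min^s(h(u)\rightsquigarrow h(v))$. $\mathbf{FinGraph}^l_\star$ (resp. $\mathbf{FinGraph}^s_\star$) is the category of connected, finite, pointed, edge-ordered graphs with lex-homomorphisms (resp. short-lex homomorphisms); $\mathbf{FinLoset}$ is the category of finite linearly ordered sets and monotone maps. Lexicographic depth-first search: with list $L=()$ and stack $S=(v_0)$, repeatedly pop $v$; if $v\notin L$, append $v$ to $L$ and push the neighbors of $v$ not in $L$ in reverse $\triangleleft$-order. Lexicographic breadth-first search: the same with a queue $Q=(v_0)$, dequeuing from the front and enqueuing the neighbors not in $L$ in $\triangleleft$-order. The respective traversal is the order in which vertices are appended to $L$. *)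

theory Defs
  imports Main "HOL-Library.While_Combinator"
begin

text \<open>A finite pointed edge-ordered graph: vertex set, for each vertex the list of its
  out-neighbours in increasing edge order (this list encodes both the edges and the
  strict linear order on each neighbourhood), and the distinguished vertex.\<close>
record 'v egraph =
  verts :: "'v set"
  succs :: "'v \<Rightarrow> 'v list"
  root  :: "'v"

definition edges :: "'v egraph \<Rightarrow> ('v \<times> 'v) set" where
  "edges G = {(u, v). u \<in> verts G \<and> v \<in> set (succs G u)}"

definition edge_less :: "'v egraph \<Rightarrow> 'v \<Rightarrow> 'v \<Rightarrow> 'v \<Rightarrow> bool" where
  "edge_less G u v1 v2 \<longleftrightarrow>
     (\<exists>i j. i < j \<and> j < length (succs G u) \<and> succs G u ! i = v1 \<and> succs G u ! j = v2)"

definition fin_graph :: "'v egraph \<Rightarrow> bool" where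
  "fin_graph G \<longleftrightarrow> finite (verts G) \<and> root G \<in> verts G \<and>
     (\<forall>u \<in> verts G. distinct (succs G u) \<and> set (succs G u) \<subseteq> verts G) \<and>
     (\<forall>v \<in> verts G. (root G, v) \<in> (edges G)\<^sup>*)"

text \<open>Paths as nonempty vertex lists; length of the path = number of edges.\<close>
definition is_path :: "'v egraph \<Rightarrow> 'v list \<Rightarrow> bool" where
  "is_path G p \<longleftrightarrow> p \<noteq> [] \<and> set p \<subseteq> verts G \<and>
     (\<forall>i. Suc i < length p \<longrightarrow> p ! Suc i \<in> set (succs G (p ! i)))"

definition path_from_to :: "'v egraph \<Rightarrow> 'v \<Rightarrow> 'v \<Rightarrow> 'v list \<Rightarrow> bool" where
  "path_from_to G u v p \<longleftrightarrow> is_path G p \<and> hd p = u \<and> last p = v"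

definition lex_less :: "'v egraph \<Rightarrow> 'v list \<Rightarrow> 'v list \<Rightarrow> bool" where
  "lex_less G p q \<longleftrightarrow>
     (\<exists>r. r \<noteq> [] \<and> q = p @ r) \<or>
     (\<exists>z x y r1 r2. z \<noteq> [] \<and> p = z @ x # r1 \<and> q = z @ y # r2 \<and> edge_less G (last z) x y)"

definition shortlex_less :: "'v egraph \<Rightarrow> 'v list \<Rightarrow> 'v list \<Rightarrow> bool" where
  "shortlex_less G p q \<longleftrightarrow>
     length p < length q \<or> (length p = length q \<and> lex_less G p q)"

definition is_lex_min :: "'v egraph \<Rightarrow> 'v \<Rightarrow> 'v \<Rightarrow> 'v list \<Rightarrow> bool" where
  "is_lex_min G u v p \<longleftrightarrow> path_from_to G u v p \<and> distinct p \<and>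
     (\<forall>q. path_from_to G u v q \<and> distinct q \<and> q \<noteq> p \<longrightarrow> lex_less G p q)"

definition is_shortlex_min :: "'v egraph \<Rightarrow> 'v \<Rightarrow> 'v \<Rightarrow> 'v list \<Rightarrow> bool" where
  "is_shortlex_min G u v p \<longleftrightarrow> path_from_to G u v p \<and>
     (\<forall>q. path_from_to G u v q \<and> q \<noteq> p \<longrightarrow> shortlex_less G p q)"

definition graph_hom :: "'a egraph \<Rightarrow> 'b egraph \<Rightarrow> ('a \<Rightarrow> 'b) \<Rightarrow> bool" where
  "graph_hom G H h \<longleftrightarrow>
     (\<forall>v \<in> verts G. h v \<in> verts H) \<and>
     (\<forall>u \<in> verts G. \<forall>v \<in> set (succs G u). h v \<in> set (succs H (h u))) \<and>
     (\<forall>v \<in> verts G. h v = root H \<longleftrightarrow> v = root G) \<and>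
     (\<forall>u \<in> verts G. \<forall>v1 v2. edge_less G u v1 v2 \<longrightarrow> edge_less H (h u) (h v1) (h v2))"

definition lex_hom :: "'a egraph \<Rightarrow> 'b egraph \<Rightarrow> ('a \<Rightarrow> 'b) \<Rightarrow> bool" where
  "lex_hom G H h \<longleftrightarrow> graph_hom G H h \<and>
     (\<forall>u \<in> verts G. \<forall>v \<in> verts G. \<forall>p.
        is_lex_min G u v p \<longrightarrow> is_lex_min H (h u) (h v) (map h p))"

definition shortlex_hom :: "'a egraph \<Rightarrow> 'b egraph \<Rightarrow> ('a \<Rightarrow> 'b) \<Rightarrow> bool" where
  "shortlex_hom G H h \<longleftrightarrow> graph_hom G H h \<and>
     (\<forall>u \<in> verts G. \<forall>v \<in> verts G. \<forall>p.
        is_shortlex_min G u v p \<longrightarrow> is_shortlex_min H (h u) (h v) (map h p))"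

text \<open>Lexicographic depth-first search. State (L, S); the stack S is a list whose head is
  the top. Pushing the new neighbours in reverse edge order leaves the least one on top.\<close>
definition dfs_step :: "'v egraph \<Rightarrow> 'v list \<times> 'v list \<Rightarrow> 'v list \<times> 'v list" where
  "dfs_step G st = (case st of (L, S) \<Rightarrow>
     (case S of [] \<Rightarrow> (L, S)
      | v # S' \<Rightarrow> if v \<in> set L then (L, S')
                  else (L @ [v], filter (\<lambda>w. w \<notin> set (L @ [v])) (succs G v) @ S')))"

definition dfs_traversal :: "'v egraph \<Rightarrow> 'v list" where
  "dfs_traversal G = fst (the (while_option (\<lambda>(L, S). S \<noteq> []) (dfs_step G) ([], [root G])))"

definition bfs_step :: "'v egraph \<Rightarrow> 'v list \<times> 'v list \<Rightarrow> 'v list \<times> 'v list" where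
  "bfs_step G st = (case st of (L, Q) \<Rightarrow>
     (case Q of [] \<Rightarrow> (L, Q)
      | v # Q' \<Rightarrow> if v \<in> set L then (L, Q')
                  else (L @ [v], Q' @ filter (\<lambda>w. w \<notin> set (L @ [v])) (succs G v))))"

definition bfs_traversal :: "'v egraph \<Rightarrow> 'v list" where
  "bfs_traversal G = fst (the (while_option (\<lambda>(L, Q). Q \<noteq> []) (bfs_step G) ([], [root G])))"

definition trav_le :: "'v list \<Rightarrow> 'v \<Rightarrow> 'v \<Rightarrow> bool" where
  "trav_le L v w \<longleftrightarrow> (\<exists>i j. i \<le> j \<and> j < length L \<and> L ! i = v \<and> L ! j = w)"

end

theory Submission
  imports Defs "HOL-Library.List_Lexorder" "HOL-Library.Sublist"
begin

text \<open>
  Both searches visit the vertices in the order of their least paths from the root: DFS in the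
  lexicographic order of min(root \<leadsto> v), BFS in the shortlex order of min^s(root \<leadsto> v).
  A lex- (short-lex) homomorphism maps least paths to least paths and preserves the path order,
  hence it preserves the traversal order.

  Annotate every frontier entry
  with the path along which it was discovered. These paths stay sorted, and they include the least
  path of every unvisited vertex whose parent in the tree of least paths is visited; the least
  unvisited vertex is such a vertex. So the next unvisited vertex popped is the least unvisited
  one, and its annotation is its least path. This needs the tree of least paths to be closed
  under prefixes, which for the lexicographic order on proper paths is an exchange argument.
\<close>

section \<open>Paths\<close>

lemma is_path_singleton [simp]: "is_path G [u] \<longleftrightarrow> u \<in> verts G"
  by (simp add: is_path_def)

lemma not_is_path_Nil [simp]: "\<not> is_path G []"
  by (simp add: is_path_def)

lemma is_path_Cons_Cons [simp]:
  "is_path G (u # v # p) \<longleftrightarrow> u \<in> verts G \<and> v \<in> set (succs G u) \<and> is_path G (v # p)"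
  unfolding is_path_def by (auto simp: All_less_Suc2 nth_Cons split: nat.splits)

lemma is_path_append:
  assumes "xs \<noteq> []" "ys \<noteq> []"
  shows "is_path G (xs @ ys) \<longleftrightarrow> is_path G xs \<and> is_path G ys \<and> hd ys \<in> set (succs G (last xs))"
  using assms by (induction xs rule: induct_list012) (auto simp: neq_Nil_conv)

lemma is_path_prefix: "is_path G (xs @ ys) \<Longrightarrow> xs \<noteq> [] \<Longrightarrow> is_path G xs"
  by (cases "ys = []") (auto simp: is_path_append)

lemma is_path_suffix: "is_path G (xs @ ys) \<Longrightarrow> ys \<noteq> [] \<Longrightarrow> is_path G ys"
  by (cases "xs = []") (auto simp: is_path_append)

lemma is_path_snoc:
  "xs \<noteq> [] \<Longrightarrow> is_path G (xs @ [w]) \<longleftrightarrow> is_path G xs \<and> w \<in> verts G \<and> w \<in> set (succs G (last xs))"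
  by (simp add: is_path_append)

lemma is_path_glue: "is_path G (xs @ [w]) \<Longrightarrow> is_path G (w # ys) \<Longrightarrow> is_path G (xs @ w # ys)"
  using is_path_append[of "xs @ [w]" ys G] by (cases ys) auto

lemma is_path_in_verts: "is_path G p \<Longrightarrow> x \<in> set p \<Longrightarrow> x \<in> verts G"
  by (auto simp: is_path_def)

lemma path_from_to_last_in_set: "path_from_to G u v p \<Longrightarrow> v \<in> set p"
  by (cases p) (auto simp: path_from_to_def)

lemma path_from_to_in_verts: "path_from_to G u v p \<Longrightarrow> v \<in> verts G"
  using path_from_to_last_in_set is_path_in_verts by (metis path_from_to_def)

lemma distinct_path_splice:
  assumes p: "is_path G (z @ Q)" "distinct (z @ Q)" and q: "is_path G (z @ T)" "distinct (z @ T)"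
    and "Q \<noteq> []" "last Q \<in> set T"
  shows "\<exists>rest. is_path G (z @ hd Q # rest) \<and> distinct (z @ hd Q # rest) \<and>
    last (hd Q # rest) = last T"
proof -
  obtain Q1 w Q2 where Q: "Q = Q1 @ w # Q2" "w \<in> set T" "\<forall>y\<in>set Q1. y \<notin> set T"
    using split_list_first_prop[of Q "\<lambda>y. y \<in> set T"] assms(5,6) last_in_set by blast
  obtain T1 T2 where T: "T = T1 @ w # T2"
    using split_list[OF \<open>w \<in> set T\<close>] by blast
  have "is_path G (z @ Q1 @ [w])"
    using is_path_prefix[of G "z @ Q1 @ [w]" Q2] p(1) Q(1) by simp
  moreover have "is_path G (w # T2)"
    using is_path_suffix[of G "z @ T1" "w # T2"] q(1) T by simp
  ultimately have "is_path G (z @ Q1 @ w # T2)"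
    using is_path_glue[of G "z @ Q1" w T2] by simp
  moreover have "distinct (z @ Q1 @ w # T2)"
  proof -
    have "distinct ((z @ Q1 @ [w]) @ Q2)" "distinct ((z @ T1) @ w # T2)"
      using p(2) q(2) Q(1) T by simp_all
    then show ?thesis
      using q(2) Q(3) T by auto
  qed
  moreover have "hd Q # tl (Q1 @ w # T2) = Q1 @ w # T2"
    using Q(1) by (cases Q1) simp_all
  ultimately show ?thesis
    using T by (intro exI[of _ "tl (Q1 @ w # T2)"]) simp
qed

definition paths_from :: "'v egraph \<Rightarrow> 'v \<Rightarrow> 'v list set" where
  "paths_from G u = {p. is_path G p \<and> hd p = u}"

section \<open>The lexicographic and shortlex path orders\<close>

definition edge_rank :: "'v egraph \<Rightarrow> 'v \<Rightarrow> 'v \<Rightarrow> nat" where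
  "edge_rank G u v = (LEAST i. i < length (succs G u) \<and> succs G u ! i = v)"

lemma edge_rank_nth:
  "distinct (succs G u) \<Longrightarrow> i < length (succs G u) \<Longrightarrow> edge_rank G u (succs G u ! i) = i"
  unfolding edge_rank_def by (rule Least_equality) (auto simp: nth_eq_iff_index_eq leI)

lemma edge_rank_less: "distinct (succs G u) \<Longrightarrow> edge_less G u x y \<Longrightarrow> edge_rank G u x < edge_rank G u y"
  unfolding edge_less_def by (auto simp: edge_rank_nth)

lemma edge_less_total:
  assumes "distinct (succs G u)" "x \<in> set (succs G u)" "y \<in> set (succs G u)" "x \<noteq> y"
  shows "edge_less G u x y \<or> edge_less G u y x"
  using assms unfolding edge_less_def in_set_conv_nth by (metis linorder_neqE_nat)

text \<open>Recording each step of a path by its rank in the edge order embeds lex_less on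
  co-initial paths into the lexicographic order on nat lists, from which it inherits its order
  properties.\<close>
fun path_code :: "'v egraph \<Rightarrow> 'v list \<Rightarrow> nat list" where
  "path_code G (u # v # p) = edge_rank G u v # path_code G (v # p)"
| "path_code G _ = []"

lemma path_code_append:
  "z \<noteq> [] \<Longrightarrow> path_code G (z @ x # r) = path_code G z @ edge_rank G (last z) x # path_code G (x # r)"
  by (induction z rule: induct_list012) auto

lemma lex_less_append_left:
  assumes "lex_less G p q" "\<not> prefix p q"
  shows "lex_less G (p @ r) q"
  using assms unfolding lex_less_def prefix_def by force

lemma shortlex_less_snoc:
  assumes "shortlex_less G p q"
  shows "shortlex_less G (p @ [a]) (q @ [b])"
proof (cases "length p < length q")
  case False
  then have "length p = length q" "lex_less G p q"
    using assms unfolding shortlex_less_def by auto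
  then obtain z x y r1 r2
    where "z \<noteq> []" "p = z @ x # r1" "q = z @ y # r2" "edge_less G (last z) x y"
    unfolding lex_less_def by auto
  then have "lex_less G (p @ [a]) (q @ [b])"
    unfolding lex_less_def by (metis append.assoc append_Cons)
  then show ?thesis
    using \<open>length p = length q\<close> by (simp add: shortlex_less_def)
qed (simp add: shortlex_less_def)

lemma lex_less_map:
  assumes hom: "graph_hom G H h" and p: "is_path G p" and less: "lex_less G p q"
  shows "lex_less H (map h p) (map h q)"
proof -
  consider (prefix) r where "r \<noteq> []" "q = p @ r"
    | (diverge) z x y r1 r2
      where "z \<noteq> []" "p = z @ x # r1" "q = z @ y # r2" "edge_less G (last z) x y"
    using less unfolding lex_less_def by blast
  then show ?thesis
  proof cases
    case prefix
    then show ?thesis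
      by (simp add: lex_less_def)
  next
    case diverge
    have "last z \<in> verts G"
      using is_path_in_verts[OF p, of "last z"] diverge by simp
    then have "edge_less H (h (last z)) (h x) (h y)"
      using hom diverge(4) unfolding graph_hom_def by blast
    then show ?thesis
      unfolding lex_less_def using diverge
      by (intro disjI2 exI[of _ "map h z"]) (simp add: last_map)
  qed
qed

lemma shortlex_less_map:
  "graph_hom G H h \<Longrightarrow> is_path G p \<Longrightarrow> shortlex_less G p q \<Longrightarrow>
     shortlex_less H (map h p) (map h q)"
  using lex_less_map unfolding shortlex_less_def by fastforce

locale finite_graph =
  fixes G :: "'v egraph"
  assumes fin_graph: "fin_graph G"
begin

lemma finite_verts: "finite (verts G)"
  and root_in_verts: "root G \<in> verts G"
  and distinct_succs: "u \<in> verts G \<Longrightarrow> distinct (succs G u)"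
  and succs_in_verts: "u \<in> verts G \<Longrightarrow> set (succs G u) \<subseteq> verts G"
  and reachable_from_root: "v \<in> verts G \<Longrightarrow> (root G, v) \<in> (edges G)\<^sup>*"
  using fin_graph unfolding fin_graph_def by auto

lemma lex_less_path_code:
  assumes "is_path G p" "lex_less G p q"
  shows "path_code G p < path_code G q"
  using assms(2) unfolding lex_less_def
proof (elim disjE exE conjE)
  fix r assume "r \<noteq> []" "q = p @ r"
  moreover have "p \<noteq> []"
    using assms(1) by (cases p) auto
  ultimately show ?thesis
    by (cases r) (simp_all add: path_code_append list_less_def lexord_append_rightI)
next
  fix z x y r1 r2 assume z: "z \<noteq> []" and pq: "p = z @ x # r1" "q = z @ y # r2"
    and xy: "edge_less G (last z) x y"
  have "last z \<in> verts G"
    using is_path_in_verts[OF assms(1), of "last z"] z pq by simp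
  then have "edge_rank G (last z) x < edge_rank G (last z) y"
    using edge_rank_less[OF distinct_succs xy] by simp
  then show ?thesis
    using z pq by (simp add: path_code_append list_less_def lexord_append_left_rightI)
qed

lemma lex_less_total:
  assumes p: "p \<in> paths_from G u" and q: "q \<in> paths_from G u" and "p \<noteq> q"
  shows "lex_less G p q \<or> lex_less G q p"
proof (cases "p \<parallel> q")
  case True
  then obtain z x y r1 r2 where "x \<noteq> y" and pq: "p = z @ x # r1" "q = z @ y # r2"
    using parallel_decomp by blast
  have "z \<noteq> []"
    using p q pq \<open>x \<noteq> y\<close> by (auto simp: paths_from_def)
  have paths: "is_path G (z @ x # r1)" "is_path G (z @ y # r2)"
    using p q pq by (simp_all add: paths_from_def)
  then have "x \<in> set (succs G (last z))" "y \<in> set (succs G (last z))"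
    using is_path_append[OF \<open>z \<noteq> []\<close>] by auto
  moreover have "last z \<in> verts G"
    using is_path_in_verts[OF paths(1), of "last z"] \<open>z \<noteq> []\<close> by simp
  ultimately have "edge_less G (last z) x y \<or> edge_less G (last z) y x"
    using edge_less_total[OF distinct_succs] \<open>x \<noteq> y\<close> by blast
  then show ?thesis
    unfolding lex_less_def using pq \<open>z \<noteq> []\<close> by metis
next
  case False
  then show ?thesis
    using \<open>p \<noteq> q\<close> unfolding parallel_def prefix_def lex_less_def by auto
qed

lemma lex_less_strict_linear:
  "asymp_on (paths_from G u) (lex_less G)"
  "transp_on (paths_from G u) (lex_less G)"
  "totalp_on (paths_from G u) (lex_less G)"
proof -
  have code: "path_code G p < path_code G q" if "p \<in> paths_from G u" "lex_less G p q" for p q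
    using that lex_less_path_code by (simp add: paths_from_def)
  show "asymp_on (paths_from G u) (lex_less G)"
  proof (rule asymp_onI)
    fix p q assume "p \<in> paths_from G u" "q \<in> paths_from G u" "lex_less G p q"
    then show "\<not> lex_less G q p"
      using code[of p q] code[of q p] by auto
  qed
  show "transp_on (paths_from G u) (lex_less G)"
  proof (rule transp_onI)
    fix p q s assume A: "p \<in> paths_from G u" "q \<in> paths_from G u" "s \<in> paths_from G u"
      and "lex_less G p q" "lex_less G q s"
    then have "path_code G p < path_code G s"
      using code[of p q] code[of q s] by auto
    then have "p \<noteq> s" "\<not> lex_less G s p"
      using code[OF A(3), of p] by auto
    then show "lex_less G p s"
      using lex_less_total[OF A(1,3)] by blast
  qed
  show "totalp_on (paths_from G u) (lex_less G)"
    by (intro totalp_onI lex_less_total)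
qed

lemma shortlex_less_strict_linear:
  "asymp_on (paths_from G u) (shortlex_less G)"
  "transp_on (paths_from G u) (shortlex_less G)"
  "totalp_on (paths_from G u) (shortlex_less G)"
proof -
  note lex = lex_less_strict_linear[of u]
  show "asymp_on (paths_from G u) (shortlex_less G)"
  proof (rule asymp_onI)
    fix p q assume "p \<in> paths_from G u" "q \<in> paths_from G u" "shortlex_less G p q"
    then show "\<not> shortlex_less G q p"
      using asymp_onD[OF lex(1), of p q] unfolding shortlex_less_def by auto
  qed
  show "transp_on (paths_from G u) (shortlex_less G)"
  proof (rule transp_onI)
    fix p q s assume "p \<in> paths_from G u" "q \<in> paths_from G u" "s \<in> paths_from G u"
      and "shortlex_less G p q" "shortlex_less G q s"
    then show "shortlex_less G p s"
      using transp_onD[OF lex(2), of p q s] unfolding shortlex_less_def by auto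
  qed
  show "totalp_on (paths_from G u) (shortlex_less G)"
  proof (rule totalp_onI)
    fix p q assume "p \<in> paths_from G u" "q \<in> paths_from G u" "p \<noteq> q"
    then show "shortlex_less G p q \<or> shortlex_less G q p"
      using totalp_onD[OF lex(3), of p q] unfolding shortlex_less_def by auto
  qed
qed

end

section \<open>Least paths\<close>

lemma finite_subset_has_least:
  assumes "finite A" "A \<noteq> {}" "A \<subseteq> B" "asymp_on B R" "transp_on B R" "totalp_on B R"
  shows "\<exists>m\<in>A. \<forall>x\<in>A. x \<noteq> m \<longrightarrow> R m x"
proof -
  have "asymp_on A R" "transp_on A R" "totalp_on A R"
    using asymp_on_subset[OF assms(4,3)] transp_on_subset[OF assms(5,3)]
      totalp_on_subset[OF assms(6,3)] .
  then obtain m where "m \<in> A" "\<forall>x\<in>A. x \<noteq> m \<longrightarrow> \<not> R x m"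
    using Finite_Set.bex_min_element[OF assms(1)] assms(2) by blast
  then show ?thesis
    using totalp_onD[OF \<open>totalp_on A R\<close>] by blast
qed

context finite_graph
begin

lemma distinct_path_if_reachable:
  assumes "u \<in> verts G" "(u, v) \<in> (edges G)\<^sup>*"
  shows "\<exists>p. path_from_to G u v p \<and> distinct p"
  using assms(2)
proof (induction rule: rtrancl_induct)
  case base
  then show ?case
    using assms(1) by (intro exI[of _ "[u]"]) (simp add: path_from_to_def)
next
  case (step y z)
  then obtain p where p: "is_path G p" "hd p = u" "last p = y" "distinct p"
    by (auto simp: path_from_to_def)
  have z: "z \<in> set (succs G y)" "z \<in> verts G"
    using step(2) succs_in_verts by (auto simp: edges_def)
  show ?case
  proof (cases "z \<in> set p")
    case True
    then obtain a b where ab: "p = (a @ [z]) @ b"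
      by (metis append.assoc append_Cons append_Nil split_list)
    then have "is_path G (a @ [z])" "hd (a @ [z]) = u"
      using p(1,2) is_path_prefix[of G "a @ [z]" b] by (auto simp: hd_append)
    moreover have "distinct (a @ [z])"
      using p(4) ab by simp
    ultimately show ?thesis
      by (auto simp: path_from_to_def)
  next
    case False
    have "p \<noteq> []"
      using p(1) by auto
    then have "path_from_to G u z (p @ [z])"
      using p z is_path_snoc[OF \<open>p \<noteq> []\<close>] by (simp add: path_from_to_def)
    then show ?thesis
      using False p(4) by auto
  qed
qed

lemma lex_min_exists:
  assumes "path_from_to G u v p0" "distinct p0"
  shows "\<exists>p. is_lex_min G u v p"
proof -
  define P where "P = {p. path_from_to G u v p \<and> distinct p}"
  have "P \<subseteq> {p. set p \<subseteq> verts G \<and> length p \<le> card (verts G)}"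
  proof
    fix p assume "p \<in> P"
    then have "set p \<subseteq> verts G" "distinct p"
      by (auto simp: P_def path_from_to_def is_path_def)
    moreover from this have "length p \<le> card (verts G)"
      using card_mono[OF finite_verts] distinct_card by metis
    ultimately show "p \<in> {p. set p \<subseteq> verts G \<and> length p \<le> card (verts G)}"
      by simp
  qed
  then have "finite P"
    using finite_lists_length_le[OF finite_verts] finite_subset by blast
  moreover have "P \<noteq> {}" "P \<subseteq> paths_from G u"
    using assms by (auto simp: P_def path_from_to_def paths_from_def)
  ultimately obtain p where "p \<in> P" "\<forall>q\<in>P. q \<noteq> p \<longrightarrow> lex_less G p q"
    using finite_subset_has_least[OF _ _ _ lex_less_strict_linear] by blast
  then show ?thesis
    unfolding is_lex_min_def P_def by blast
qed

lemma shortlex_min_exists: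
  assumes "path_from_to G u v p0"
  shows "\<exists>p. is_shortlex_min G u v p"
proof -
  define P where "P = {p. path_from_to G u v p \<and> length p \<le> length p0}"
  have "P \<subseteq> {p. set p \<subseteq> verts G \<and> length p \<le> length p0}"
    by (auto simp: P_def path_from_to_def is_path_def)
  then have "finite P"
    using finite_lists_length_le[OF finite_verts] finite_subset by blast
  moreover have "P \<noteq> {}" "P \<subseteq> paths_from G u"
    using assms by (auto simp: P_def path_from_to_def paths_from_def)
  ultimately obtain p where p: "p \<in> P" "\<forall>q\<in>P. q \<noteq> p \<longrightarrow> shortlex_less G p q"
    using finite_subset_has_least[OF _ _ _ shortlex_less_strict_linear] by blast
  have "shortlex_less G p q" if "path_from_to G u v q" "q \<noteq> p" for q
  proof (cases "q \<in> P")
    case False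
    then show ?thesis
      using that p(1) by (simp add: P_def shortlex_less_def)
  qed (use p(2) that in blast)
  then show ?thesis
    using p(1) unfolding is_shortlex_min_def P_def by blast
qed

lemma lex_min_unique: "is_lex_min G u v p \<Longrightarrow> is_lex_min G u v q \<Longrightarrow> p = q"
  using asymp_onD[OF lex_less_strict_linear(1)]
  by (fastforce simp: is_lex_min_def path_from_to_def paths_from_def)

lemma shortlex_min_unique: "is_shortlex_min G u v p \<Longrightarrow> is_shortlex_min G u v q \<Longrightarrow> p = q"
  using asymp_onD[OF shortlex_less_strict_linear(1)]
  by (fastforce simp: is_shortlex_min_def path_from_to_def paths_from_def)

lemma lex_min_prefix:
  assumes min: "is_lex_min G u v (a @ b)" and "a \<noteq> []"
  shows "is_lex_min G u (last a) a"
proof (rule ccontr)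
  assume not_min: "\<not> ?thesis"
  have ab: "is_path G (a @ b)" "hd (a @ b) = u" "last (a @ b) = v" "distinct (a @ b)"
    using min by (auto simp: is_lex_min_def path_from_to_def)
  have a: "path_from_to G u (last a) a" "distinct a"
    using ab \<open>a \<noteq> []\<close> is_path_prefix by (auto simp: path_from_to_def)
  obtain q where q: "is_lex_min G u (last a) q"
    using lex_min_exists[OF a] by blast
  have q_path: "is_path G q" "hd q = u" "last q = last a" "distinct q"
    using q by (auto simp: is_lex_min_def path_from_to_def)
  have "q \<noteq> a"
    using not_min q by auto
  then have "lex_less G q a"
    using q a by (auto simp: is_lex_min_def)
  moreover have "\<not> prefix q a"
  proof
    assume "prefix q a"
    then obtain t where "a = q @ t" "t \<noteq> []"
      using \<open>q \<noteq> a\<close> by (auto simp: prefix_def)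
    moreover have "q \<noteq> []"
      using q_path by auto
    ultimately show False
      using q_path(3) \<open>distinct a\<close> by (metis disjoint_iff distinct_append last_appendR last_in_set)
  qed
  ultimately obtain z x y r1 r2 where z: "z \<noteq> []" and q_eq: "q = z @ x # r1"
    and a_eq: "a = z @ y # r2" and xy: "edge_less G (last z) x y"
    unfolding lex_less_def prefix_def by blast
  \<comment> \<open>Leave z like q does, and rejoin a @ b where q first meets it after z.\<close>
  have "last (x # r1) \<in> set (y # r2 @ b)"
    using q_path(3) q_eq a_eq by simp
  then obtain rest where new: "is_path G (z @ x # rest)" "distinct (z @ x # rest)"
    "last (x # rest) = last (y # r2 @ b)"
    using distinct_path_splice[of G z "x # r1" "y # r2 @ b"] q_path(1,4) q_eq ab(1,4) a_eq by auto
  then have "path_from_to G u v (z @ x # rest)"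
    using z q_path(2) q_eq ab(3) a_eq by (simp add: path_from_to_def)
  moreover have "lex_less G (z @ x # rest) (a @ b)"
    unfolding lex_less_def using a_eq z xy by auto
  ultimately show False
    using min new(2) asymp_onD[OF lex_less_strict_linear(1)[of u], of "z @ x # rest" "a @ b"] ab
    by (auto simp: is_lex_min_def path_from_to_def paths_from_def)
qed
lemma shortlex_min_butlast:
  assumes min: "is_shortlex_min G u w (a @ [w])" and "a \<noteq> []"
  shows "is_shortlex_min G u (last a) a"
proof (rule ccontr)
  assume not_min: "\<not> ?thesis"
  have aw: "is_path G (a @ [w])" "hd (a @ [w]) = u"
    using min by (auto simp: is_shortlex_min_def path_from_to_def)
  then have a: "path_from_to G u (last a) a" "w \<in> verts G" "w \<in> set (succs G (last a))"
    using is_path_snoc[OF \<open>a \<noteq> []\<close>] \<open>a \<noteq> []\<close> by (auto simp: path_from_to_def)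
  obtain q where q: "is_shortlex_min G u (last a) q"
    using shortlex_min_exists[OF a(1)] by blast
  have q_path: "is_path G q" "hd q = u" "last q = last a" "q \<noteq> []"
    using q by (auto simp: is_shortlex_min_def path_from_to_def)
  have "q \<noteq> a"
    using not_min q by auto
  then have "shortlex_less G q a"
    using q a by (auto simp: is_shortlex_min_def)
  then have "shortlex_less G (q @ [w]) (a @ [w])"
    by (rule shortlex_less_snoc)
  moreover have "path_from_to G u w (q @ [w])"
    using q_path a is_path_snoc[OF q_path(4)] by (simp add: path_from_to_def)
  ultimately show False
    using min asymp_onD[OF shortlex_less_strict_linear(1)[of u], of "q @ [w]" "a @ [w]"] aw
    by (auto simp: is_shortlex_min_def path_from_to_def paths_from_def)
qed

end

definition lex_min_path :: "'v egraph \<Rightarrow> 'v \<Rightarrow> 'v list" where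
  "lex_min_path G v = (SOME p. is_lex_min G (root G) v p)"

definition shortlex_min_path :: "'v egraph \<Rightarrow> 'v \<Rightarrow> 'v list" where
  "shortlex_min_path G v = (SOME p. is_shortlex_min G (root G) v p)"

context finite_graph
begin

lemma is_lex_min_path: "v \<in> verts G \<Longrightarrow> is_lex_min G (root G) v (lex_min_path G v)"
  unfolding lex_min_path_def
  using distinct_path_if_reachable[OF root_in_verts reachable_from_root] lex_min_exists
  by (metis someI_ex)

lemma lex_min_path_eq: "is_lex_min G (root G) v p \<Longrightarrow> lex_min_path G v = p"
  unfolding lex_min_path_def using lex_min_unique by (metis someI)

lemma is_shortlex_min_path: "v \<in> verts G \<Longrightarrow> is_shortlex_min G (root G) v (shortlex_min_path G v)"
  unfolding shortlex_min_path_def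
  using distinct_path_if_reachable[OF root_in_verts reachable_from_root] shortlex_min_exists
  by (metis someI_ex)

lemma shortlex_min_path_eq: "is_shortlex_min G (root G) v p \<Longrightarrow> shortlex_min_path G v = p"
  unfolding shortlex_min_path_def using shortlex_min_unique by (metis someI)

end

section \<open>Graph search with a stack or a queue\<close>

datatype frontier = Stack | Queue

fun push :: "frontier \<Rightarrow> 'a list \<Rightarrow> 'a list \<Rightarrow> 'a list" where
  "push Stack xs ys = xs @ ys"
| "push Queue xs ys = ys @ xs"

lemma set_push [simp]: "set (push k xs ys) = set xs \<union> set ys"
  by (cases k) auto

lemma list_all2_push:
  "list_all2 P xs xs' \<Longrightarrow> list_all2 P ys ys' \<Longrightarrow> list_all2 P (push k xs ys) (push k xs' ys')"
  by (cases k) (simp_all add: list_all2_appendI)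

lemma sorted_wrt_pushI:
  assumes "sorted_wrt R xs" "sorted_wrt R ys"
    and "\<And>x y. x \<in> set xs \<Longrightarrow> y \<in> set ys \<Longrightarrow> sorted_wrt R (push k [x] [y])"
  shows "sorted_wrt R (push k xs ys)"
  using assms by (cases k) (auto simp: sorted_wrt_append)

definition search_step :: "frontier \<Rightarrow> 'v egraph \<Rightarrow> 'v list \<times> 'v list \<Rightarrow> 'v list \<times> 'v list" where
  "search_step k G st = (case st of (L, S) \<Rightarrow>
     (case S of [] \<Rightarrow> (L, S)
      | v # S' \<Rightarrow> if v \<in> set L then (L, S')
                  else (L @ [v], push k (filter (\<lambda>w. w \<notin> set (L @ [v])) (succs G v)) S')))"

definition search_traversal :: "frontier \<Rightarrow> 'v egraph \<Rightarrow> 'v list" where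
  "search_traversal k G =
     fst (the (while_option (\<lambda>(L, S). S \<noteq> []) (search_step k G) ([], [root G])))"

lemma dfs_traversal_eq: "dfs_traversal G = search_traversal Stack G"
proof -
  have "dfs_step G = search_step Stack G"
    by (rule ext) (simp add: dfs_step_def search_step_def split: prod.split list.split)
  then show ?thesis
    by (simp add: dfs_traversal_def search_traversal_def)
qed

lemma bfs_traversal_eq: "bfs_traversal G = search_traversal Queue G"
proof -
  have "bfs_step G = search_step Queue G"
    by (rule ext) (simp add: bfs_step_def search_step_def split: prod.split list.split)
  then show ?thesis
    by (simp add: bfs_traversal_def search_traversal_def)
qed

lemma trav_le_sorted_iff:
  assumes "sorted_wrt R xs" "asymp_on (set xs) R" "x \<in> set xs" "y \<in> set xs"
  shows "trav_le xs x y \<longleftrightarrow> x = y \<or> R x y"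
proof
  assume "trav_le xs x y"
  then obtain i j where "i \<le> j" "j < length xs" "xs ! i = x" "xs ! j = y"
    unfolding trav_le_def by blast
  then show "x = y \<or> R x y"
    using assms(1) by (cases "i = j") (auto simp: sorted_wrt_iff_nth_less)
next
  assume xy: "x = y \<or> R x y"
  obtain i j where ij: "i < length xs" "xs ! i = x" "j < length xs" "xs ! j = y"
    using assms(3,4) by (auto simp: in_set_conv_nth)
  have "\<not> j < i"
  proof
    assume "j < i"
    then have "R y x"
      using assms(1) ij by (auto simp: sorted_wrt_iff_nth_less)
    then show False
      using xy asymp_onD[OF assms(2)] assms(3,4) by blast
  qed
  then show "trav_le xs x y"
    unfolding trav_le_def using ij by (metis not_le)
qed

text \<open>Only push_sorted depends on the frontier discipline: a stack
  must put a newly discovered path before an older frontier path, a queue after it.\<close>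
locale least_path_search = finite_graph +
  fixes kind :: frontier
    and path_less :: "'v list \<Rightarrow> 'v list \<Rightarrow> bool" (infix \<open>\<sqsubset>\<close> 50)
    and tree :: "'v \<Rightarrow> 'v list"
  assumes path_less_asymp: "asymp_on (paths_from G (root G)) (\<sqsubset>)"
    and path_less_transp: "transp_on (paths_from G (root G)) (\<sqsubset>)"
    and path_less_totalp: "totalp_on (paths_from G (root G)) (\<sqsubset>)"
    and path_less_append: "r \<noteq> [] \<Longrightarrow> q \<sqsubset> q @ r"
    and path_less_snoc_edge: "q \<noteq> [] \<Longrightarrow> edge_less G (last q) x y \<Longrightarrow> q @ [x] \<sqsubset> q @ [y]"
    and tree_path: "v \<in> verts G \<Longrightarrow> path_from_to G (root G) v (tree v)"
    and tree_butlast: "v \<in> verts G \<Longrightarrow> tree v = a @ [w] \<Longrightarrow> a \<noteq> [] \<Longrightarrow> tree (last a) = a"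
    and tree_minimal: "path_from_to G (root G) v \<pi> \<Longrightarrow> distinct \<pi> \<Longrightarrow> tree v = \<pi> \<or> tree v \<sqsubset> \<pi>"
    and push_sorted: "\<lbrakk>p \<in> verts G; v \<in> verts G; tree p \<sqsubset> tree v; v \<notin> set (tree p);
      tree v \<sqsubset> tree p @ [s]\<rbrakk> \<Longrightarrow> sorted_wrt (\<sqsubset>) (push kind [tree v @ [c]] [tree p @ [s]])"
begin

lemma path_less_irrefl: "p \<in> paths_from G (root G) \<Longrightarrow> \<not> p \<sqsubset> p"
  using asymp_onD[OF path_less_asymp] by blast

lemma path_less_asym:
  "p \<in> paths_from G (root G) \<Longrightarrow> q \<in> paths_from G (root G) \<Longrightarrow> p \<sqsubset> q \<Longrightarrow> \<not> q \<sqsubset> p"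
  using asymp_onD[OF path_less_asymp] by blast

lemma path_less_trans:
  "\<lbrakk>p \<in> paths_from G (root G); q \<in> paths_from G (root G); s \<in> paths_from G (root G);
    p \<sqsubset> q; q \<sqsubset> s\<rbrakk> \<Longrightarrow> p \<sqsubset> s"
  using transp_onD[OF path_less_transp] by blast

lemma tree_props:
  assumes "v \<in> verts G"
  shows "tree v \<in> paths_from G (root G)" "tree v \<noteq> []" "last (tree v) = v"
  using tree_path[OF assms] by (auto simp: path_from_to_def paths_from_def)

lemma tree_in_verts: "v \<in> verts G \<Longrightarrow> x \<in> set (tree v) \<Longrightarrow> x \<in> verts G"
  using tree_path[of v] is_path_in_verts[of G "tree v" x] by (simp add: path_from_to_def)

lemma tree_inj: "v \<in> verts G \<Longrightarrow> w \<in> verts G \<Longrightarrow> tree v = tree w \<Longrightarrow> v = w"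
  using tree_props(3) by metis

lemma tree_root: "tree (root G) = [root G]"
proof (rule ccontr)
  assume ne: "tree (root G) \<noteq> [root G]"
  obtain r where r: "tree (root G) = [root G] @ r"
    using tree_props(1,2)[OF root_in_verts] by (cases "tree (root G)") (auto simp: paths_from_def)
  then have "[root G] \<sqsubset> tree (root G)"
    using ne path_less_append[of r "[root G]"] by auto
  moreover have "tree (root G) \<sqsubset> [root G]"
    using ne tree_minimal[of "root G" "[root G]"] root_in_verts by (simp add: path_from_to_def)
  moreover have "[root G] \<in> paths_from G (root G)"
    using root_in_verts by (simp add: paths_from_def)
  ultimately show False
    using path_less_asym tree_props(1)[OF root_in_verts] by blast
qed

lemma tree_parent:
  assumes "w \<in> verts G" "w \<noteq> root G"
  shows "\<exists>p\<in>verts G. tree w = tree p @ [w]"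
proof -
  let ?a = "butlast (tree w)"
  have w: "tree w = ?a @ [w]"
    using tree_props(2,3)[OF assms(1)] by (metis append_butlast_last_id)
  have "?a \<noteq> []"
  proof
    assume "?a = []"
    then have "tree w = [w]"
      using w by simp
    then show False
      using tree_path[OF assms(1)] assms(2) by (simp add: path_from_to_def)
  qed
  moreover have "last ?a \<in> verts G"
    using tree_in_verts[OF assms(1)] \<open>?a \<noteq> []\<close> by (metis in_set_butlastD last_in_set)
  ultimately show ?thesis
    using w tree_butlast[OF assms(1) w] by metis
qed

lemma tree_ancestor:
  assumes "y \<in> verts G" "x \<in> set (tree y)"
  shows "tree x = tree y \<or> tree x \<sqsubset> tree y"
  using assms
proof (induction "length (tree y)" arbitrary: y rule: less_induct)
  case less
  show ?case
  proof (cases "x = y")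
    case False
    then have "y \<noteq> root G"
      using less.prems(2) tree_root by auto
    then obtain p where p: "p \<in> verts G" "tree y = tree p @ [y]"
      using tree_parent less.prems(1) by blast
    then have "x \<in> set (tree p)"
      using less.prems(2) False by auto
    then have "tree x = tree p \<or> tree x \<sqsubset> tree p"
      using less.hyps p by simp
    moreover have "tree p \<sqsubset> tree y"
      using p(2) path_less_append by simp
    moreover have "x \<in> verts G"
      using tree_in_verts less.prems by blast
    ultimately show ?thesis
      using path_less_trans tree_props(1) p(1) less.prems(1) by metis
  qed simp
qed

lemma distinct_tree: "v \<in> verts G \<Longrightarrow> distinct (tree v)"
proof (induction "length (tree v)" arbitrary: v rule: less_induct)
  case less
  show ?case
  proof (cases "v = root G")
    case False
    then obtain p where p: "p \<in> verts G" "tree v = tree p @ [v]"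
      using tree_parent less.prems by blast
    have "v \<notin> set (tree p)"
    proof
      assume "v \<in> set (tree p)"
      then have "tree v = tree p \<or> tree v \<sqsubset> tree p"
        using tree_ancestor p(1) by blast
      moreover have "tree p \<sqsubset> tree v"
        using p(2) path_less_append by simp
      ultimately show False
        using p path_less_asym tree_props(1) less.prems by fastforce
    qed
    then show ?thesis
      using less.hyps p by simp
  qed (simp add: tree_root)
qed

lemma least_vertex:
  assumes "U \<subseteq> verts G" "U \<noteq> {}"
  shows "\<exists>u\<in>U. \<forall>y\<in>U. y \<noteq> u \<longrightarrow> tree u \<sqsubset> tree y"
proof -
  have "finite (tree ` U)" "tree ` U \<noteq> {}" "tree ` U \<subseteq> paths_from G (root G)"
    using assms finite_subset[OF _ finite_verts] tree_props(1) by auto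
  then obtain u where "u \<in> U" "\<forall>q\<in>tree ` U. q \<noteq> tree u \<longrightarrow> tree u \<sqsubset> q"
    using finite_subset_has_least[OF _ _ _ path_less_asymp path_less_transp path_less_totalp]
    by blast
  then show ?thesis
    using tree_inj assms(1) by blast
qed


definition candidate :: "'v list \<Rightarrow> 'v list \<Rightarrow> 'v \<Rightarrow> bool" where
  "candidate L \<pi> s \<longleftrightarrow>
     \<pi> = [root G] \<and> s = root G \<or> (\<exists>p\<in>set L. s \<in> set (succs G p) \<and> \<pi> = tree p @ [s])"

definition fringe :: "'v list \<Rightarrow> 'v set" where
  "fringe L = {w \<in> verts G - set L. w = root G \<or> (\<exists>p\<in>set L. tree w = tree p @ [w])}"

definition visited_segment :: "'v list \<Rightarrow> bool" where
  "visited_segment L \<longleftrightarrow> distinct L \<and> set L \<subseteq> verts G \<and> sorted_wrt (\<lambda>x y. tree x \<sqsubset> tree y) L \<and>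
     (\<forall>x\<in>set L. \<forall>y\<in>verts G - set L. tree x \<sqsubset> tree y)"

text \<open>The ghost list \<Pi> annotates each frontier entry with the path along which it was
  discovered.\<close>
fun search_inv :: "'v list \<times> 'v list \<Rightarrow> bool" where
  "search_inv (L, S) \<longleftrightarrow> visited_segment L \<and>
     (\<exists>\<Pi>. list_all2 (candidate L) \<Pi> S \<and> sorted_wrt (\<sqsubset>) \<Pi> \<and> tree ` fringe L \<subseteq> set \<Pi>)"

lemma candidate_last: "candidate L \<pi> s \<Longrightarrow> last \<pi> = s"
  unfolding candidate_def by auto

lemma candidate_mono: "set L \<subseteq> set L' \<Longrightarrow> candidate L \<pi> s \<Longrightarrow> candidate L' \<pi> s"
  unfolding candidate_def by blast

lemma candidate_in_verts: "set L \<subseteq> verts G \<Longrightarrow> candidate L \<pi> s \<Longrightarrow> s \<in> verts G"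
  unfolding candidate_def using root_in_verts succs_in_verts by blast

lemma visited_ancestor:
  assumes seg: "visited_segment L" and "p \<in> set L" "x \<in> set (tree p)"
  shows "x \<in> set L"
proof (rule ccontr)
  assume "x \<notin> set L"
  have p: "p \<in> verts G"
    using seg \<open>p \<in> set L\<close> by (auto simp: visited_segment_def)
  then have x: "x \<in> verts G"
    using tree_in_verts \<open>x \<in> set (tree p)\<close> by blast
  have "tree p \<sqsubset> tree x"
    using seg \<open>p \<in> set L\<close> \<open>x \<notin> set L\<close> x by (auto simp: visited_segment_def)
  moreover have "tree x = tree p \<or> tree x \<sqsubset> tree p"
    using tree_ancestor[OF p \<open>x \<in> set (tree p)\<close>] .
  ultimately show False
    using tree_inj[OF x p] \<open>p \<in> set L\<close> \<open>x \<notin> set L\<close> path_less_asym tree_props(1) x p by metis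
qed

lemma candidate_path:
  assumes seg: "visited_segment L" and "candidate L \<pi> s" "s \<notin> set L"
  shows "path_from_to G (root G) s \<pi>" "distinct \<pi>"
proof -
  consider "\<pi> = [root G]" "s = root G"
    | p where "p \<in> set L" "s \<in> set (succs G p)" "\<pi> = tree p @ [s]"
    using \<open>candidate L \<pi> s\<close> unfolding candidate_def by blast
  then have "path_from_to G (root G) s \<pi> \<and> distinct \<pi>"
  proof cases
    case 1
    then show ?thesis
      using root_in_verts by (simp add: path_from_to_def)
  next
    case 2
    then have p: "p \<in> verts G"
      using seg by (auto simp: visited_segment_def)
    have "s \<notin> set (tree p)"
      using visited_ancestor[OF seg \<open>p \<in> set L\<close>] \<open>s \<notin> set L\<close> by blast
    moreover have "s \<in> verts G"
      using succs_in_verts[OF p] \<open>s \<in> set (succs G p)\<close> by blast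
    ultimately show ?thesis
      using 2 tree_path[OF p] tree_props(2)[OF p] distinct_tree[OF p] is_path_snoc[of "tree p" G s]
      by (simp add: path_from_to_def)
  qed
  then show "path_from_to G (root G) s \<pi>" "distinct \<pi>"
    by blast+
qed

lemma least_unvisited_in_fringe:
  assumes seg: "visited_segment L" and u: "u \<in> verts G - set L"
    and least: "\<forall>y\<in>verts G - set L. y \<noteq> u \<longrightarrow> tree u \<sqsubset> tree y"
  shows "u \<in> fringe L"
proof (cases "u = root G")
  case False
  then obtain p where p: "p \<in> verts G" "tree u = tree p @ [u]"
    using tree_parent u by blast
  then have "tree p \<sqsubset> tree u"
    using path_less_append by simp
  moreover have "p \<noteq> u"
    using p(2) by auto
  ultimately have "p \<in> set L"
    using least p(1) u path_less_asym tree_props(1) by blast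
  then show ?thesis
    using u p(2) by (auto simp: fringe_def)
qed (use u in \<open>simp add: fringe_def\<close>)


lemma popped_is_least:
  assumes seg: "visited_segment L" and cand: "candidate L \<pi> v" and "v \<notin> set L"
    and sorted: "sorted_wrt (\<sqsubset>) (\<pi> # \<Pi>)" and covered: "tree ` fringe L \<subseteq> set (\<pi> # \<Pi>)"
  shows "tree v = \<pi>" "\<forall>y\<in>verts G - set L. y \<noteq> v \<longrightarrow> tree v \<sqsubset> tree y"
proof -
  have v: "v \<in> verts G - set L"
    using candidate_in_verts seg cand \<open>v \<notin> set L\<close> by (auto simp: visited_segment_def)
  obtain u where u: "u \<in> verts G - set L" and least: "\<forall>y\<in>verts G - set L. y \<noteq> u \<longrightarrow> tree u \<sqsubset> tree y"
    using least_vertex[of "verts G - set L"] v by blast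
  have \<pi>: "path_from_to G (root G) v \<pi>" "distinct \<pi>"
    using candidate_path[OF seg cand \<open>v \<notin> set L\<close>] by blast+
  then have \<pi>_rooted: "\<pi> \<in> paths_from G (root G)"
    by (simp add: path_from_to_def paths_from_def)
  have "tree u \<in> set (\<pi> # \<Pi>)"
    using covered least_unvisited_in_fringe[OF seg u least] by blast
  then have \<pi>_u: "\<pi> = tree u \<or> \<pi> \<sqsubset> tree u"
    using sorted by auto
  have v_\<pi>: "tree v = \<pi> \<or> tree v \<sqsubset> \<pi>"
    using tree_minimal[OF \<pi>] .
  have tu: "tree u \<in> paths_from G (root G)" and tv: "tree v \<in> paths_from G (root G)"
    using u v tree_props(1) by auto
  have "u = v"
  proof (rule ccontr)
    assume "u \<noteq> v"
    then have "tree u \<sqsubset> tree v"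
      using least v by auto
    moreover have "tree v = tree u \<or> tree v \<sqsubset> tree u"
      using \<pi>_u v_\<pi> path_less_trans[OF tv \<pi>_rooted tu] by blast
    ultimately show False
      using path_less_irrefl[OF tu] path_less_asym[OF tu tv] by auto
  qed
  then show "tree v = \<pi>"
    using \<pi>_u v_\<pi> path_less_asym[OF tv \<pi>_rooted] by auto
  show "\<forall>y\<in>verts G - set L. y \<noteq> v \<longrightarrow> tree v \<sqsubset> tree y"
    using least \<open>u = v\<close> by blast
qed

lemma visited_segment_snoc:
  assumes seg: "visited_segment L" and v: "v \<in> verts G - set L"
    and least: "\<forall>y\<in>verts G - set L. y \<noteq> v \<longrightarrow> tree v \<sqsubset> tree y"
  shows "visited_segment (L @ [v])"
  using assms unfolding visited_segment_def by (auto simp: sorted_wrt_append)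

lemma fringe_snoc:
  assumes "v \<in> verts G"
  shows "fringe (L @ [v]) \<subseteq> fringe L - {v} \<union>
    {w \<in> set (filter (\<lambda>w. w \<notin> set (L @ [v])) (succs G v)). tree w = tree v @ [w]}"
proof
  fix w assume w: "w \<in> fringe (L @ [v])"
  show "w \<in> fringe L - {v} \<union>
    {w \<in> set (filter (\<lambda>w. w \<notin> set (L @ [v])) (succs G v)). tree w = tree v @ [w]}"
  proof (cases "tree w = tree v @ [w]")
    case True
    have "w \<in> verts G"
      using w by (simp add: fringe_def)
    then have "w \<in> set (succs G v)"
      using True tree_path[of w] tree_props(2)[OF assms] is_path_snoc[of "tree v" G w]
        tree_props(3)[OF assms] by (simp add: path_from_to_def)
    then show ?thesis
      using w True by (simp add: fringe_def)
  next
    case False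
    then show ?thesis
      using w by (auto simp: fringe_def)
  qed
qed

lemma children_sorted:
  assumes "v \<in> verts G"
  shows "sorted_wrt (\<sqsubset>) (map (\<lambda>c. tree v @ [c]) (filter P (succs G v)))"
proof -
  have "sorted_wrt (edge_less G v) (succs G v)"
    unfolding sorted_wrt_iff_nth_less edge_less_def by blast
  then have "sorted_wrt (edge_less G v) (filter P (succs G v))"
    by (rule sorted_wrt_filter)
  then show ?thesis
    unfolding sorted_wrt_map
    by (rule sorted_wrt_mono_rel[rotated])
      (use path_less_snoc_edge tree_props(2,3)[OF assms] in auto)
qed


lemma push_candidate_sorted:
  assumes seg: "visited_segment L" and v: "v \<in> verts G - set L"
    and cand: "candidate L b s" and "tree v \<sqsubset> b"
  shows "sorted_wrt (\<sqsubset>) (push kind [tree v @ [c]] [b])"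
proof -
  have tv: "tree v \<in> paths_from G (root G)"
    using v tree_props(1) by blast
  consider "b = [root G]" | p where "p \<in> set L" "b = tree p @ [s]"
    using cand unfolding candidate_def by blast
  then show ?thesis
  proof cases
    case 1
    obtain r where r: "tree v = [root G] @ r"
      using tv tree_props(2) v by (cases "tree v") (auto simp: paths_from_def)
    have "[root G] \<in> paths_from G (root G)"
      using root_in_verts by (simp add: paths_from_def)
    moreover have "r = [] \<or> [root G] \<sqsubset> tree v"
      using r path_less_append[of r "[root G]"] by auto
    ultimately have False
      using 1 \<open>tree v \<sqsubset> b\<close> r path_less_irrefl path_less_asym[OF tv] by auto
    then show ?thesis ..
  next
    case 2
    have "p \<in> verts G" "tree p \<sqsubset> tree v"
      using seg 2(1) v by (auto simp: visited_segment_def)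
    moreover have "v \<notin> set (tree p)"
      using visited_ancestor[OF seg 2(1)] v by blast
    ultimately show ?thesis
      using push_sorted v \<open>tree v \<sqsubset> b\<close> 2(2) by blast
  qed
qed

lemma push_children_sorted:
  assumes seg: "visited_segment L" and v: "v \<in> verts G - set L"
    and rel: "list_all2 (candidate L) \<Pi> S" and sorted: "sorted_wrt (\<sqsubset>) (tree v # \<Pi>)"
  shows "sorted_wrt (\<sqsubset>) (push kind (map (\<lambda>c. tree v @ [c]) (filter P (succs G v))) \<Pi>)"
proof (rule sorted_wrt_pushI)
  show "sorted_wrt (\<sqsubset>) (map (\<lambda>c. tree v @ [c]) (filter P (succs G v)))"
    using children_sorted v by simp
  show "sorted_wrt (\<sqsubset>) \<Pi>"
    using sorted by simp
  fix x b assume "x \<in> set (map (\<lambda>c. tree v @ [c]) (filter P (succs G v)))" "b \<in> set \<Pi>"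
  then obtain c where "x = tree v @ [c]"
    by auto
  obtain s where "candidate L b s"
    using rel \<open>b \<in> set \<Pi>\<close> by (auto simp: list_all2_conv_all_nth in_set_conv_nth)
  moreover have "tree v \<sqsubset> b"
    using sorted \<open>b \<in> set \<Pi>\<close> by simp
  ultimately show "sorted_wrt (\<sqsubset>) (push kind [x] [b])"
    using push_candidate_sorted[OF seg v] \<open>x = tree v @ [c]\<close> by blast
qed

lemma search_inv_init: "search_inv ([], [root G])"
proof -
  have "fringe [] = {root G}"
    using root_in_verts by (auto simp: fringe_def)
  then show ?thesis
    by (auto simp: visited_segment_def candidate_def tree_root intro!: exI[of _ "[[root G]]"])
qed

lemma search_inv_pop_visited:
  assumes "search_inv (L, v # S)" "v \<in> set L"
  shows "search_inv (L, S)"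
proof -
  obtain \<pi> \<Pi> where seg: "visited_segment L" and rel: "candidate L \<pi> v" "list_all2 (candidate L) \<Pi> S"
    and sorted: "sorted_wrt (\<sqsubset>) (\<pi> # \<Pi>)" and covered: "tree ` fringe L \<subseteq> set (\<pi> # \<Pi>)"
    using assms(1) by (auto simp: list_all2_Cons2)
  have "tree w \<in> set \<Pi>" if "w \<in> fringe L" for w
  proof -
    have "tree w \<noteq> \<pi>"
      using that candidate_last[OF rel(1)] tree_props(3) assms(2) by (auto simp: fringe_def)
    then show ?thesis
      using covered that by auto
  qed
  then show ?thesis
    using seg rel(2) sorted by auto
qed

lemma search_inv_pop_unvisited:
  assumes "search_inv (L, v # S)" "v \<notin> set L"
  defines "F \<equiv> filter (\<lambda>w. w \<notin> set (L @ [v])) (succs G v)"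
  shows "search_inv (L @ [v], push kind F S)"
proof -
  obtain \<pi> \<Pi> where seg: "visited_segment L" and rel: "candidate L \<pi> v" "list_all2 (candidate L) \<Pi> S"
    and sorted: "sorted_wrt (\<sqsubset>) (\<pi> # \<Pi>)" and covered: "tree ` fringe L \<subseteq> set (\<pi> # \<Pi>)"
    using assms(1) by (auto simp: list_all2_Cons2)
  have v: "v \<in> verts G - set L"
    using candidate_in_verts seg rel(1) assms(2) by (auto simp: visited_segment_def)
  note least = popped_is_least[OF seg rel(1) assms(2) sorted covered]
  define C where "C = map (\<lambda>c. tree v @ [c]) F"
  have "list_all2 (candidate (L @ [v])) C F"
    unfolding C_def list_all2_map1 by (rule list.rel_refl_strong) (auto simp: F_def candidate_def)
  moreover have "list_all2 (candidate (L @ [v])) \<Pi> S"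
    using rel(2) by (rule list_all2_mono) (rule candidate_mono[of L], auto)
  ultimately have rel': "list_all2 (candidate (L @ [v])) (push kind C \<Pi>) (push kind F S)"
    by (rule list_all2_push)
  have "sorted_wrt (\<sqsubset>) (push kind C \<Pi>)"
    unfolding C_def F_def using push_children_sorted[OF seg v rel(2)] sorted least(1) by simp
  moreover have "tree w \<in> set (push kind C \<Pi>)" if "w \<in> fringe (L @ [v])" for w
  proof (cases "w \<in> fringe L")
    case True
    then have "w \<noteq> v" "w \<in> verts G"
      using that by (auto simp: fringe_def)
    then have "tree w \<noteq> \<pi>"
      using least(1) tree_inj v by auto
    then show ?thesis
      using covered True by auto
  next
    case False
    then show ?thesis
      using that fringe_snoc[of v L] v by (auto simp: C_def F_def)
  qed
  ultimately show ?thesis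
    using visited_segment_snoc[OF seg v least(2)] rel' by auto
qed


lemma search_inv_step:
  assumes "search_inv (L, S)" "S \<noteq> []"
  shows "search_inv (search_step kind G (L, S))"
proof -
  obtain v S' where S: "S = v # S'"
    using assms(2) by (cases S) auto
  show ?thesis
  proof (cases "v \<in> set L")
    case True
    then show ?thesis
      using search_inv_pop_visited assms(1) S by (simp add: search_step_def del: search_inv.simps)
  next
    case False
    then show ?thesis
      using search_inv_pop_unvisited assms(1) S by (simp add: search_step_def del: search_inv.simps)
  qed
qed

lemma search_step_decreasing:
  assumes "search_inv (L, S)" "S \<noteq> []"
  shows "(search_step kind G (L, S), (L, S)) \<in>
    measures [\<lambda>(L, S). card (verts G) - length L, \<lambda>(L, S). length S]"
proof -
  obtain v S' where S: "S = v # S'"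
    using assms(2) by (cases S) auto
  show ?thesis
  proof (cases "v \<in> set L")
    case False
    obtain \<pi> where "visited_segment L" "candidate L \<pi> v"
      using assms(1) S by (auto simp: list_all2_Cons2)
    then have "set L \<subset> verts G" "distinct L"
      using candidate_in_verts False by (auto simp: visited_segment_def)
    then have "length L < card (verts G)"
      using psubset_card_mono[OF finite_verts] distinct_card by metis
    then have "card (verts G) - Suc (length L) < card (verts G) - length L"
      by linarith
    then show ?thesis
      using S False by (simp add: search_step_def)
  qed (simp add: S search_step_def)
qed

lemma search_inv_final:
  assumes "search_inv (L, [])"
  shows "set L = verts G"
proof (rule ccontr)
  assume "set L \<noteq> verts G"
  moreover have seg: "visited_segment L" and "fringe L = {}"
    using assms by auto
  ultimately have "verts G - set L \<noteq> {}"
    by (auto simp: visited_segment_def)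
  then obtain u where "u \<in> verts G - set L" "\<forall>y\<in>verts G - set L. y \<noteq> u \<longrightarrow> tree u \<sqsubset> tree y"
    using least_vertex[of "verts G - set L"] by blast
  then show False
    using least_unvisited_in_fringe[OF seg] \<open>fringe L = {}\<close> by blast
qed

lemma search_traversal_sorted:
  "distinct (search_traversal kind G) \<and> set (search_traversal kind G) = verts G \<and>
   sorted_wrt (\<lambda>x y. tree x \<sqsubset> tree y) (search_traversal kind G)"
proof -
  let ?b = "\<lambda>(L, S). S \<noteq> []"
  have step: "search_inv (search_step kind G s)" if "search_inv s" "?b s" for s
    using that search_inv_step by (cases s) (simp del: search_inv.simps)
  have decreasing: "(search_step kind G s, s) \<in>
      measures [\<lambda>(L, S). card (verts G) - length L, \<lambda>(L, S). length S]"
    if "search_inv s \<and> ?b s" for s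
    using that search_step_decreasing by (cases s) (simp del: search_inv.simps)
  obtain t where t: "while_option ?b (search_step kind G) ([], [root G]) = Some t"
    using wf_rel_while_option_Some[OF wf_measures decreasing, of search_inv] step search_inv_init
    by blast
  have "search_inv t"
    using while_option_rule[where P = search_inv, OF step t search_inv_init] by blast
  moreover have "snd t = []"
    using while_option_stop[OF t] by (cases t) auto
  moreover have "fst t = search_traversal kind G"
    using t by (simp add: search_traversal_def)
  ultimately have inv: "search_inv (search_traversal kind G, [])"
    by (metis prod.collapse)
  then have "visited_segment (search_traversal kind G)"
    by simp
  then show ?thesis
    using search_inv_final[OF inv] by (simp add: visited_segment_def)
qed

lemma trav_le_search_traversal_iff:
  assumes "x \<in> verts G" "y \<in> verts G"
  shows "trav_le (search_traversal kind G) x y \<longleftrightarrow> x = y \<or> tree x \<sqsubset> tree y"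
proof (rule trav_le_sorted_iff)
  show "asymp_on (set (search_traversal kind G)) (\<lambda>x y. tree x \<sqsubset> tree y)"
    using search_traversal_sorted path_less_asym tree_props(1) by (auto intro: asymp_onI)
qed (use search_traversal_sorted assms in auto)

end

lemma search_traversal_order_preserving:
  assumes G: "least_path_search G k less\<^sub>G tree\<^sub>G" and H: "least_path_search H k less\<^sub>H tree\<^sub>H"
    and verts: "\<And>x. x \<in> verts G \<Longrightarrow> h x \<in> verts H"
    and tree: "\<And>x. x \<in> verts G \<Longrightarrow> tree\<^sub>H (h x) = map h (tree\<^sub>G x)"
    and less: "\<And>p q. p \<in> paths_from G (root G) \<Longrightarrow> less\<^sub>G p q \<Longrightarrow> less\<^sub>H (map h p) (map h q)"
    and vw: "v \<in> verts G" "w \<in> verts G" "trav_le (search_traversal k G) v w"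
  shows "trav_le (search_traversal k H) (h v) (h w)"
proof -
  have "v = w \<or> less\<^sub>G (tree\<^sub>G v) (tree\<^sub>G w)"
    using least_path_search.trav_le_search_traversal_iff[OF G] vw by blast
  then have "h v = h w \<or> less\<^sub>H (tree\<^sub>H (h v)) (tree\<^sub>H (h w))"
    using less least_path_search.tree_props(1)[OF G] tree vw(1,2) by auto
  then show ?thesis
    using least_path_search.trav_le_search_traversal_iff[OF H] verts vw(1,2) by blast
qed

section \<open>Depth-first and breadth-first search\<close>

context finite_graph
begin

lemma least_path_search_lex: "least_path_search G Stack (lex_less G) (lex_min_path G)"
proof unfold_locales
  note lex = lex_less_strict_linear[of "root G"]
  show "asymp_on (paths_from G (root G)) (lex_less G)"
    "transp_on (paths_from G (root G)) (lex_less G)"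
    "totalp_on (paths_from G (root G)) (lex_less G)"
    using lex by blast+
  show "lex_less G q (q @ r)" if "r \<noteq> []" for q r :: "'v list"
    using that by (simp add: lex_less_def)
  show "lex_less G (q @ [x]) (q @ [y])" if "q \<noteq> []" "edge_less G (last q) x y" for q x y
    using that unfolding lex_less_def by (intro disjI2 exI[of _ q]) auto
  show "path_from_to G (root G) v (lex_min_path G v)" if "v \<in> verts G" for v
    using is_lex_min_path[OF that] by (simp add: is_lex_min_def)
  show "lex_min_path G (last a) = a"
    if "v \<in> verts G" "lex_min_path G v = a @ [w]" "a \<noteq> []" for v a w
    using lex_min_prefix is_lex_min_path[OF that(1)] that(2,3) lex_min_path_eq by metis
  show "lex_min_path G v = \<pi> \<or> lex_less G (lex_min_path G v) \<pi>"
    if "path_from_to G (root G) v \<pi>" "distinct \<pi>" for v \<pi>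
  proof -
    have "v \<in> verts G"
      using path_from_to_in_verts that(1) .
    then show ?thesis
      using is_lex_min_path that unfolding is_lex_min_def by blast
  qed
  show "sorted_wrt (lex_less G) (push Stack [lex_min_path G v @ [c]] [lex_min_path G p @ [s]])"
    if "p \<in> verts G" "v \<in> verts G" "lex_less G (lex_min_path G p) (lex_min_path G v)"
      "v \<notin> set (lex_min_path G p)" "lex_less G (lex_min_path G v) (lex_min_path G p @ [s])"
    for p v s c
  proof -
    have "lex_min_path G v \<in> paths_from G (root G)"
      using is_lex_min_path[OF that(2)]
      by (auto simp: is_lex_min_def path_from_to_def paths_from_def)
    then have "lex_min_path G v \<noteq> lex_min_path G p @ [s]"
      using that(5) asymp_onD[OF lex(1), of "lex_min_path G v" "lex_min_path G v"] by auto
    moreover have "v \<in> set (lex_min_path G v)"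
      using is_lex_min_path[OF that(2)] path_from_to_last_in_set by (auto simp: is_lex_min_def)
    ultimately have "\<not> prefix (lex_min_path G v) (lex_min_path G p @ [s])"
      using that(4) set_mono_prefix by fastforce
    then show ?thesis
      using lex_less_append_left[OF that(5)] by simp
  qed
qed

lemma least_path_search_shortlex:
  "least_path_search G Queue (shortlex_less G) (shortlex_min_path G)"
proof unfold_locales
  show "asymp_on (paths_from G (root G)) (shortlex_less G)"
    "transp_on (paths_from G (root G)) (shortlex_less G)"
    "totalp_on (paths_from G (root G)) (shortlex_less G)"
    using shortlex_less_strict_linear by blast+
  show "shortlex_less G q (q @ r)" if "r \<noteq> []" for q r :: "'v list"
    using that by (simp add: shortlex_less_def)
  show "shortlex_less G (q @ [x]) (q @ [y])" if "q \<noteq> []" "edge_less G (last q) x y" for q x y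
    using that unfolding shortlex_less_def lex_less_def by (intro disjI2 conjI exI[of _ q]) auto
  show "path_from_to G (root G) v (shortlex_min_path G v)" if "v \<in> verts G" for v
    using is_shortlex_min_path[OF that] by (simp add: is_shortlex_min_def)
  show "shortlex_min_path G (last a) = a"
    if "v \<in> verts G" "shortlex_min_path G v = a @ [w]" "a \<noteq> []" for v a w
    using shortlex_min_butlast is_shortlex_min_path[OF that(1)] that(2,3) shortlex_min_path_eq
    by (metis is_shortlex_min_def path_from_to_def last_snoc)
  show "shortlex_min_path G v = \<pi> \<or> shortlex_less G (shortlex_min_path G v) \<pi>"
    if "path_from_to G (root G) v \<pi>" "distinct \<pi>" for v \<pi>
    using is_shortlex_min_path[OF path_from_to_in_verts[OF that(1)]] that(1)
    unfolding is_shortlex_min_def by blast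
  show "sorted_wrt (shortlex_less G)
      (push Queue [shortlex_min_path G v @ [c]] [shortlex_min_path G p @ [s]])"
    if "shortlex_less G (shortlex_min_path G p) (shortlex_min_path G v)" for p v s c
    using shortlex_less_snoc[OF that] by simp
qed

end

lemma graph_hom_root: "fin_graph G \<Longrightarrow> graph_hom G H h \<Longrightarrow> h (root G) = root H"
  unfolding fin_graph_def graph_hom_def by blast

lemma lex_hom_min_path:
  assumes "fin_graph G" "fin_graph H" "lex_hom G H h" "x \<in> verts G"
  shows "lex_min_path H (h x) = map h (lex_min_path G x)"
proof -
  have "is_lex_min H (h (root G)) (h x) (map h (lex_min_path G x))"
    using assms finite_graph.is_lex_min_path[of G x] finite_graph.root_in_verts[of G]
    by (simp add: lex_hom_def finite_graph_def)
  moreover have "h (root G) = root H"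
    using graph_hom_root[OF assms(1)] assms(3) unfolding lex_hom_def by blast
  ultimately show ?thesis
    using finite_graph.lex_min_path_eq[of H] assms(2) by (simp add: finite_graph_def)
qed

lemma shortlex_hom_min_path:
  assumes "fin_graph G" "fin_graph H" "shortlex_hom G H h" "x \<in> verts G"
  shows "shortlex_min_path H (h x) = map h (shortlex_min_path G x)"
proof -
  have "is_shortlex_min H (h (root G)) (h x) (map h (shortlex_min_path G x))"
    using assms finite_graph.is_shortlex_min_path[of G x] finite_graph.root_in_verts[of G]
    by (simp add: shortlex_hom_def finite_graph_def)
  moreover have "h (root G) = root H"
    using graph_hom_root[OF assms(1)] assms(3) unfolding shortlex_hom_def by blast
  ultimately show ?thesis
    using finite_graph.shortlex_min_path_eq[of H] assms(2) by (simp add: finite_graph_def)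
qed

lemma dfs_traversal_enumerates:
  assumes "fin_graph G"
  shows "distinct (dfs_traversal G) \<and> set (dfs_traversal G) = verts G"
proof -
  interpret least_path_search G Stack "lex_less G" "lex_min_path G"
    using assms by (intro finite_graph.least_path_search_lex finite_graph.intro)
  show ?thesis
    using search_traversal_sorted by (simp add: dfs_traversal_eq)
qed

lemma bfs_traversal_enumerates:
  assumes "fin_graph G"
  shows "distinct (bfs_traversal G) \<and> set (bfs_traversal G) = verts G"
proof -
  interpret least_path_search G Queue "shortlex_less G" "shortlex_min_path G"
    using assms by (intro finite_graph.least_path_search_shortlex finite_graph.intro)
  show ?thesis
    using search_traversal_sorted by (simp add: bfs_traversal_eq)
qed

lemma dfs_traversal_monotone:
  assumes "fin_graph G" "fin_graph H" "lex_hom G H h"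
    and "v \<in> verts G" "w \<in> verts G" "trav_le (dfs_traversal G) v w"
  shows "trav_le (dfs_traversal H) (h v) (h w)"
  unfolding dfs_traversal_eq
proof (rule search_traversal_order_preserving[where h = h and v = v and w = w])
  show "least_path_search G Stack (lex_less G) (lex_min_path G)"
    "least_path_search H Stack (lex_less H) (lex_min_path H)"
    using finite_graph.least_path_search_lex[OF finite_graph.intro] assms(1,2) by blast+
  show "h x \<in> verts H" if "x \<in> verts G" for x
    using assms(3) that by (auto simp: lex_hom_def graph_hom_def)
  show "lex_min_path H (h x) = map h (lex_min_path G x)" if "x \<in> verts G" for x
    using lex_hom_min_path assms(1-3) that .
  show "lex_less H (map h p) (map h q)" if "p \<in> paths_from G (root G)" "lex_less G p q" for p q
    using lex_less_map assms(3) that by (auto simp: lex_hom_def paths_from_def)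
qed (use assms(4-6) in \<open>simp_all add: dfs_traversal_eq\<close>)

lemma bfs_traversal_monotone:
  assumes "fin_graph G" "fin_graph H" "shortlex_hom G H h"
    and "v \<in> verts G" "w \<in> verts G" "trav_le (bfs_traversal G) v w"
  shows "trav_le (bfs_traversal H) (h v) (h w)"
  unfolding bfs_traversal_eq
proof (rule search_traversal_order_preserving[where h = h and v = v and w = w])
  show "least_path_search G Queue (shortlex_less G) (shortlex_min_path G)"
    "least_path_search H Queue (shortlex_less H) (shortlex_min_path H)"
    using finite_graph.least_path_search_shortlex[OF finite_graph.intro] assms(1,2) by blast+
  show "h x \<in> verts H" if "x \<in> verts G" for x
    using assms(3) that by (auto simp: shortlex_hom_def graph_hom_def)
  show "shortlex_min_path H (h x) = map h (shortlex_min_path G x)" if "x \<in> verts G" for x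
    using shortlex_hom_min_path assms(1-3) that .
  show "shortlex_less H (map h p) (map h q)"
    if "p \<in> paths_from G (root G)" "shortlex_less G p q" for p q
    using shortlex_less_map assms(3) that by (auto simp: shortlex_hom_def paths_from_def)
qed (use assms(4-6) in \<open>simp_all add: bfs_traversal_eq\<close>)

theorem corollary9p4:
  shows
   "(\<forall>G :: 'a egraph. fin_graph G \<longrightarrow>
        distinct (dfs_traversal G) \<and> set (dfs_traversal G) = verts G) \<and>
    (\<forall>(G :: 'a egraph) (H :: 'b egraph) h. fin_graph G \<and> fin_graph H \<and> lex_hom G H h \<longrightarrow>
        (\<forall>v \<in> verts G. \<forall>w \<in> verts G. trav_le (dfs_traversal G) v w \<longrightarrow>
            trav_le (dfs_traversal H) (h v) (h w))) \<and>
    (\<forall>G :: 'a egraph. fin_graph G \<longrightarrow>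
        distinct (bfs_traversal G) \<and> set (bfs_traversal G) = verts G) \<and>
    (\<forall>(G :: 'a egraph) (H :: 'b egraph) h. fin_graph G \<and> fin_graph H \<and> shortlex_hom G H h \<longrightarrow>
        (\<forall>v \<in> verts G. \<forall>w \<in> verts G. trav_le (bfs_traversal G) v w \<longrightarrow>
            trav_le (bfs_traversal H) (h v) (h w)))"
proof (intro conjI allI impI ballI)
  fix G :: "'a egraph" and H :: "'b egraph" and h v w
  assume "fin_graph G \<and> fin_graph H \<and> lex_hom G H h" "v \<in> verts G" "w \<in> verts G"
    "trav_le (dfs_traversal G) v w"
  then show "trav_le (dfs_traversal H) (h v) (h w)"
    using dfs_traversal_monotone[of G H h v w] by blast
next
  fix G :: "'a egraph" and H :: "'b egraph" and h v w
  assume "fin_graph G \<and> fin_graph H \<and> shortlex_hom G H h" "v \<in> verts G" "w \<in> verts G"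
    "trav_le (bfs_traversal G) v w"
  then show "trav_le (bfs_traversal H) (h v) (h w)"
    using bfs_traversal_monotone[of G H h v w] by blast
qed (simp_all add: dfs_traversal_enumerates bfs_traversal_enumerates)

end
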